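(* Let $\mathcal D$ be a semicartesian symmetric monoidal category and $X$ an object. The following are equivalent: (1) $X$ admits broadcasting, i.e. there is a morphism $b_X\colon X\to X\otimes X$ with $(\mathrm{id}_X\otimes\mathrm{del}_X)\circ b_X=\mathrm{id}_X$ and $(\mathrm{del}_X\otimes\mathrm{id}_X)\circ b_X=\mathrm{id}_X$. (2) The discard morphism $\mathrm{del}_X\colon X\to I$ is non-creative.
   Context: A symmetric monoidal category $(\mathcal D,\otimes,I)$ is semicartesian if $I$ is terminal; $\mathrm{del}_X\colon X\to I$ denotes the unique morphism (unitors suppressed). A dilation of $p\colon A\to X$ is a morphism $\pi\colon A\to X\otimes E$ (for some object $E$) with $(\mathrm{id}_X\otimes\mathrm{del}_E)\circ\pi=p$. A morphism $p\colon A\to X$ is non-creative if every dilation $\pi\colon A\to X\otimes E$ of $p$ equals $(p\otimes\mathrm{id}_E)\circ\iota$ for some dilation $\iota\colon A\to A\otimes E$ of $\mathrm{id}_A$. *)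

theory Defs
  imports Main
begin

text \<open>A symmetric monoidal category presented by explicit data: objects of type 'o
  (those in Ob), morphisms of type 'm (those in Mor), with domain/codomain, identities,
  composition (Comp g f = g after f), tensor on objects and morphisms, unit object,
  associator, left/right unitors and symmetry.\<close>

record ('o, 'm) smc_data =
  Ob :: "'o set"
  Mor :: "'m set"
  Dom :: "'m \<Rightarrow> 'o"
  Cod :: "'m \<Rightarrow> 'o"
  Id :: "'o \<Rightarrow> 'm"
  Comp :: "'m \<Rightarrow> 'm \<Rightarrow> 'm"
  TensO :: "'o \<Rightarrow> 'o \<Rightarrow> 'o"
  TensM :: "'m \<Rightarrow> 'm \<Rightarrow> 'm"
  Unit :: "'o"
  Assoc :: "'o \<Rightarrow> 'o \<Rightarrow> 'o \<Rightarrow> 'm"   \<comment> \<open>(X \<otimes> Y) \<otimes> Z \<rightarrow> X \<otimes> (Y \<otimes> Z)\<close>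
  LUnit :: "'o \<Rightarrow> 'm"    \<comment> \<open>I \<otimes> X \<rightarrow> X\<close>
  RUnit :: "'o \<Rightarrow> 'm"    \<comment> \<open>X \<otimes> I \<rightarrow> X\<close>
  Sym :: "'o \<Rightarrow> 'o \<Rightarrow> 'm"      \<comment> \<open>X \<otimes> Y \<rightarrow> Y \<otimes> X\<close>

definition hom :: "('o, 'm, 'z) smc_data_scheme \<Rightarrow> 'o \<Rightarrow> 'o \<Rightarrow> 'm set" where
  "hom S A B = {f \<in> Mor S. Dom S f = A \<and> Cod S f = B}"

definition is_iso :: "('o, 'm, 'z) smc_data_scheme \<Rightarrow> 'm \<Rightarrow> bool" where
  "is_iso S f \<longleftrightarrow> f \<in> Mor S \<and> (\<exists>g \<in> hom S (Cod S f) (Dom S f).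
      Comp S g f = Id S (Dom S f) \<and> Comp S f g = Id S (Cod S f))"

locale semicartesian_smc =
  fixes S :: "('o, 'm, 'z) smc_data_scheme"
  assumes dom_ob: "f \<in> Mor S \<Longrightarrow> Dom S f \<in> Ob S"
    and cod_ob: "f \<in> Mor S \<Longrightarrow> Cod S f \<in> Ob S"
    and id_hom: "X \<in> Ob S \<Longrightarrow> Id S X \<in> hom S X X"
    and comp_hom: "\<lbrakk>f \<in> Mor S; g \<in> Mor S; Cod S f = Dom S g\<rbrakk>
        \<Longrightarrow> Comp S g f \<in> hom S (Dom S f) (Cod S g)"
    and comp_id_left: "f \<in> Mor S \<Longrightarrow> Comp S (Id S (Cod S f)) f = f"
    and comp_id_right: "f \<in> Mor S \<Longrightarrow> Comp S f (Id S (Dom S f)) = f"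
    and comp_assoc: "\<lbrakk>f \<in> Mor S; g \<in> Mor S; h \<in> Mor S; Cod S f = Dom S g; Cod S g = Dom S h\<rbrakk>
        \<Longrightarrow> Comp S h (Comp S g f) = Comp S (Comp S h g) f"
    and unit_ob: "Unit S \<in> Ob S"
    and tens_ob: "\<lbrakk>X \<in> Ob S; Y \<in> Ob S\<rbrakk> \<Longrightarrow> TensO S X Y \<in> Ob S"
    and tens_hom: "\<lbrakk>f \<in> Mor S; g \<in> Mor S\<rbrakk> \<Longrightarrow>
        TensM S f g \<in> hom S (TensO S (Dom S f) (Dom S g)) (TensO S (Cod S f) (Cod S g))"
    and tens_id: "\<lbrakk>X \<in> Ob S; Y \<in> Ob S\<rbrakk> \<Longrightarrow> TensM S (Id S X) (Id S Y) = Id S (TensO S X Y)"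
    and tens_comp: "\<lbrakk>f \<in> Mor S; g \<in> Mor S; f' \<in> Mor S; g' \<in> Mor S;
        Cod S f = Dom S g; Cod S f' = Dom S g'\<rbrakk> \<Longrightarrow>
        TensM S (Comp S g f) (Comp S g' f') = Comp S (TensM S g g') (TensM S f f')"
    and assoc_hom: "\<lbrakk>X \<in> Ob S; Y \<in> Ob S; Z \<in> Ob S\<rbrakk> \<Longrightarrow>
        Assoc S X Y Z \<in> hom S (TensO S (TensO S X Y) Z) (TensO S X (TensO S Y Z))"
    and assoc_iso: "\<lbrakk>X \<in> Ob S; Y \<in> Ob S; Z \<in> Ob S\<rbrakk> \<Longrightarrow> is_iso S (Assoc S X Y Z)"
    and assoc_nat: "\<lbrakk>f \<in> Mor S; g \<in> Mor S; h \<in> Mor S\<rbrakk> \<Longrightarrow>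
        Comp S (Assoc S (Cod S f) (Cod S g) (Cod S h)) (TensM S (TensM S f g) h)
        = Comp S (TensM S f (TensM S g h)) (Assoc S (Dom S f) (Dom S g) (Dom S h))"
    and lunit_hom: "X \<in> Ob S \<Longrightarrow> LUnit S X \<in> hom S (TensO S (Unit S) X) X"
    and lunit_iso: "X \<in> Ob S \<Longrightarrow> is_iso S (LUnit S X)"
    and lunit_nat: "f \<in> Mor S \<Longrightarrow>
        Comp S (LUnit S (Cod S f)) (TensM S (Id S (Unit S)) f) = Comp S f (LUnit S (Dom S f))"
    and runit_hom: "X \<in> Ob S \<Longrightarrow> RUnit S X \<in> hom S (TensO S X (Unit S)) X"
    and runit_iso: "X \<in> Ob S \<Longrightarrow> is_iso S (RUnit S X)"
    and runit_nat: "f \<in> Mor S \<Longrightarrow>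
        Comp S (RUnit S (Cod S f)) (TensM S f (Id S (Unit S))) = Comp S f (RUnit S (Dom S f))"
    and pentagon: "\<lbrakk>W \<in> Ob S; X \<in> Ob S; Y \<in> Ob S; Z \<in> Ob S\<rbrakk> \<Longrightarrow>
        Comp S (Assoc S W X (TensO S Y Z)) (Assoc S (TensO S W X) Y Z)
        = Comp S (TensM S (Id S W) (Assoc S X Y Z))
            (Comp S (Assoc S W (TensO S X Y) Z) (TensM S (Assoc S W X Y) (Id S Z)))"
    and triangle: "\<lbrakk>X \<in> Ob S; Y \<in> Ob S\<rbrakk> \<Longrightarrow>
        Comp S (TensM S (Id S X) (LUnit S Y)) (Assoc S X (Unit S) Y)
        = TensM S (RUnit S X) (Id S Y)"
    and sym_hom: "\<lbrakk>X \<in> Ob S; Y \<in> Ob S\<rbrakk> \<Longrightarrow> Sym S X Y \<in> hom S (TensO S X Y) (TensO S Y X)"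
    and sym_nat: "\<lbrakk>f \<in> Mor S; g \<in> Mor S\<rbrakk> \<Longrightarrow>
        Comp S (Sym S (Cod S f) (Cod S g)) (TensM S f g)
        = Comp S (TensM S g f) (Sym S (Dom S f) (Dom S g))"
    and sym_inv: "\<lbrakk>X \<in> Ob S; Y \<in> Ob S\<rbrakk> \<Longrightarrow>
        Comp S (Sym S Y X) (Sym S X Y) = Id S (TensO S X Y)"
    and hexagon: "\<lbrakk>X \<in> Ob S; Y \<in> Ob S; Z \<in> Ob S\<rbrakk> \<Longrightarrow>
        Comp S (Assoc S Y Z X) (Comp S (Sym S X (TensO S Y Z)) (Assoc S X Y Z))
        = Comp S (TensM S (Id S Y) (Sym S X Z))
            (Comp S (Assoc S Y X Z) (TensM S (Sym S X Y) (Id S Z)))"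
    and unit_terminal: "X \<in> Ob S \<Longrightarrow> \<exists>!f. f \<in> hom S X (Unit S)"

definition del :: "('o, 'm, 'z) smc_data_scheme \<Rightarrow> 'o \<Rightarrow> 'm" where
  "del S X = (THE f. f \<in> hom S X (Unit S))"

text \<open>A dilation \<pi> : A \<rightarrow> X \<otimes> E of p : A \<rightarrow> X, where (id_X \<otimes> del_E) \<circ> \<pi> = p,
  with the right unitor X \<otimes> I \<cong> X written explicitly.\<close>
definition dilation :: "('o, 'm, 'z) smc_data_scheme \<Rightarrow> 'm \<Rightarrow> 'o \<Rightarrow> 'm \<Rightarrow> bool" where
  "dilation S p E \<pi> \<longleftrightarrow> p \<in> Mor S \<and> E \<in> Ob S \<and>
     \<pi> \<in> hom S (Dom S p) (TensO S (Cod S p) E) \<and>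
     Comp S (RUnit S (Cod S p)) (Comp S (TensM S (Id S (Cod S p)) (del S E)) \<pi>) = p"

definition non_creative :: "('o, 'm, 'z) smc_data_scheme \<Rightarrow> 'm \<Rightarrow> bool" where
  "non_creative S p \<longleftrightarrow> p \<in> Mor S \<and>
     (\<forall>E \<in> Ob S. \<forall>\<pi>. dilation S p E \<pi> \<longrightarrow>
        (\<exists>\<iota>. dilation S (Id S (Dom S p)) E \<iota> \<and> \<pi> = Comp S (TensM S p (Id S E)) \<iota>))"

definition admits_broadcasting :: "('o, 'm, 'z) smc_data_scheme \<Rightarrow> 'o \<Rightarrow> bool" where
  "admits_broadcasting S X \<longleftrightarrow> (\<exists>b \<in> hom S X (TensO S X X).
     Comp S (RUnit S X) (Comp S (TensM S (Id S X) (del S X)) b) = Id S X \<and>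
     Comp S (LUnit S X) (Comp S (TensM S (del S X) (Id S X)) b) = Id S X)"

end

theory Submission
  imports Defs
begin

text \<open>Given a broadcasting map \<open>b\<close>, a dilation \<open>\<pi> : X \<rightarrow> I \<otimes> E\<close> of \<open>del\<^sub>X\<close> is nothing
  but a morphism \<open>f = \<lambda>\<^sub>E \<circ> \<pi> : X \<rightarrow> E\<close>, and \<open>\<iota> = (id\<^sub>X \<otimes> f) \<circ> b\<close> is a dilation of \<open>id\<^sub>X\<close>
  through which it factors: the two counit laws of \<open>b\<close> say exactly that \<open>\<iota>\<close> dilates \<open>id\<^sub>X\<close>
  and that \<open>(del\<^sub>X \<otimes> id\<^sub>E) \<circ> \<iota>\<close> is \<open>\<pi>\<close>. Conversely, since \<open>I\<close> is terminal, \<open>\<lambda>\<^sub>X\<^sup>-\<^sup>1 : X \<rightarrow> I \<otimes> X\<close>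
  is a dilation of \<open>del\<^sub>X\<close>; the dilation \<open>\<iota> : X \<rightarrow> X \<otimes> X\<close> of \<open>id\<^sub>X\<close> provided by
  non-creativity satisfies one counit law by being a dilation of \<open>id\<^sub>X\<close> and the other by
  \<open>(del\<^sub>X \<otimes> id\<^sub>X) \<circ> \<iota> = \<lambda>\<^sub>X\<^sup>-\<^sup>1\<close>, so it is a broadcasting map.\<close>

context semicartesian_smc
begin

lemma comp_in_hom: "f \<in> hom S A B \<Longrightarrow> g \<in> hom S B C \<Longrightarrow> Comp S g f \<in> hom S A C"
  using comp_hom by (simp add: hom_def)

lemma tens_in_hom:
  "f \<in> hom S A B \<Longrightarrow> g \<in> hom S C D \<Longrightarrow> TensM S f g \<in> hom S (TensO S A C) (TensO S B D)"
  using tens_hom by (simp add: hom_def)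

lemma comp_assoc_hom: "f \<in> hom S A B \<Longrightarrow> g \<in> hom S B C \<Longrightarrow> h \<in> hom S C D \<Longrightarrow>
    Comp S h (Comp S g f) = Comp S (Comp S h g) f"
  using comp_assoc by (simp add: hom_def)

lemma comp_id_left_hom: "f \<in> hom S A B \<Longrightarrow> Comp S (Id S B) f = f"
  using comp_id_left by (auto simp: hom_def)

lemma comp_id_right_hom: "f \<in> hom S A B \<Longrightarrow> Comp S f (Id S A) = f"
  using comp_id_right by (auto simp: hom_def)

lemma tens_comp_hom: "f \<in> hom S A B \<Longrightarrow> g \<in> hom S B C \<Longrightarrow> f' \<in> hom S A' B' \<Longrightarrow>
    g' \<in> hom S B' C' \<Longrightarrow> TensM S (Comp S g f) (Comp S g' f') = Comp S (TensM S g g') (TensM S f f')"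
  using tens_comp by (simp add: hom_def)

lemma hom_dom_ob: "f \<in> hom S A B \<Longrightarrow> A \<in> Ob S"
  using dom_ob by (auto simp: hom_def)

lemma hom_cod_ob: "f \<in> hom S A B \<Longrightarrow> B \<in> Ob S"
  using cod_ob by (auto simp: hom_def)

lemma id_in_hom_cod: "f \<in> hom S A B \<Longrightarrow> Id S B \<in> hom S B B"
  using id_hom hom_cod_ob by blast

lemma id_in_hom_dom: "f \<in> hom S A B \<Longrightarrow> Id S A \<in> hom S A A"
  using id_hom hom_dom_ob by blast

lemma comp_tens_id_left:
  assumes "g \<in> hom S A B" "h \<in> hom S C D" "f \<in> hom S C' C"
  shows "Comp S (TensM S g h) (TensM S (Id S A) f) = TensM S g (Comp S h f)"
  using tens_comp_hom[OF id_in_hom_dom[OF assms(1)] assms(1) assms(3,2)]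
  by (simp add: comp_id_right_hom[OF assms(1)])

lemma tens_factor_left:
  assumes "g \<in> hom S A B" "f \<in> hom S C D"
  shows "TensM S g f = Comp S (TensM S (Id S B) f) (TensM S g (Id S C))"
  using tens_comp_hom[OF assms(1) id_in_hom_cod[OF assms(1)] id_in_hom_dom[OF assms(2)] assms(2)]
  by (simp add: comp_id_left_hom[OF assms(1)] comp_id_right_hom[OF assms(2)])

lemma iso_cancel_left:
  assumes "is_iso S h" "z \<in> hom S A (Dom S h)" "w \<in> hom S A (Dom S h)"
    and "Comp S h z = Comp S h w"
  shows "z = w"
proof -
  obtain g where g: "g \<in> hom S (Cod S h) (Dom S h)" "Comp S g h = Id S (Dom S h)"
    using assms(1) unfolding is_iso_def by blast
  have h: "h \<in> hom S (Dom S h) (Cod S h)"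
    using assms(1) by (simp add: is_iso_def hom_def)
  have "z = Comp S g (Comp S h z)"
    using comp_assoc_hom[OF assms(2) h g(1)] g(2) comp_id_left_hom[OF assms(2)] by simp
  also have "\<dots> = Comp S g (Comp S h w)"
    using assms(4) by simp
  also have "\<dots> = w"
    using comp_assoc_hom[OF assms(3) h g(1)] g(2) comp_id_left_hom[OF assms(3)] by simp
  finally show ?thesis .
qed

lemma lunit_inverse:
  assumes "X \<in> Ob S"
  obtains g where "g \<in> hom S X (TensO S (Unit S) X)" "Comp S (LUnit S X) g = Id S X"
  using lunit_iso[OF assms] lunit_hom[OF assms] unfolding is_iso_def hom_def by auto

lemma del_in_hom: "X \<in> Ob S \<Longrightarrow> del S X \<in> hom S X (Unit S)"
  unfolding del_def by (rule theI'[OF unit_terminal])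

lemma del_unique: "f \<in> hom S X (Unit S) \<Longrightarrow> f = del S X"
  using unit_terminal del_in_hom hom_dom_ob by blast

lemma del_comp: "f \<in> hom S A B \<Longrightarrow> Comp S (del S B) f = del S A"
  using del_unique comp_in_hom del_in_hom hom_cod_ob by blast

lemma dilation_del_iff:
  assumes "X \<in> Ob S"
  shows "dilation S (del S X) E \<pi> \<longleftrightarrow> E \<in> Ob S \<and> \<pi> \<in> hom S X (TensO S (Unit S) E)"
proof -
  have dX: "del S X \<in> hom S X (Unit S)"
    using del_in_hom[OF assms] .
  have "Comp S (RUnit S (Unit S)) (Comp S (TensM S (Id S (Unit S)) (del S E)) \<pi>) = del S X"
    if "E \<in> Ob S" "\<pi> \<in> hom S X (TensO S (Unit S) E)"
    using comp_in_hom[OF comp_in_hom[OF that(2) tens_in_hom[OF id_hom[OF unit_ob] del_in_hom[OF that(1)]]]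
        runit_hom[OF unit_ob]]
    by (rule del_unique)
  then show ?thesis
    using dX by (auto simp: dilation_def hom_def)
qed

lemma dilation_Id_iff:
  assumes "X \<in> Ob S"
  shows "dilation S (Id S X) E \<iota> \<longleftrightarrow> E \<in> Ob S \<and> \<iota> \<in> hom S X (TensO S X E) \<and>
    Comp S (RUnit S X) (Comp S (TensM S (Id S X) (del S E)) \<iota>) = Id S X"
  using id_hom[OF assms] by (auto simp: dilation_def hom_def)

lemma broadcasting_lift_dilation:
  assumes b: "b \<in> hom S X (TensO S X X)"
    and b_right: "Comp S (RUnit S X) (Comp S (TensM S (Id S X) (del S X)) b) = Id S X"
    and f: "f \<in> hom S X E"
  shows "dilation S (Id S X) E (Comp S (TensM S (Id S X) f) b)"
proof -
  have X: "X \<in> Ob S" and E: "E \<in> Ob S"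
    using hom_dom_ob[OF b] hom_cod_ob[OF f] .
  have IdX: "Id S X \<in> hom S X X" and dE: "del S E \<in> hom S E (Unit S)"
    using id_hom[OF X] del_in_hom[OF E] .
  have idf: "TensM S (Id S X) f \<in> hom S (TensO S X X) (TensO S X E)"
    using tens_in_hom[OF IdX f] .
  have "Comp S (TensM S (Id S X) (del S E)) (Comp S (TensM S (Id S X) f) b)
      = Comp S (TensM S (Id S X) (del S X)) b"
    using comp_assoc_hom[OF b idf tens_in_hom[OF IdX dE]] comp_tens_id_left[OF IdX dE f] del_comp[OF f]
    by simp
  then show ?thesis
    unfolding dilation_Id_iff[OF X] using E b_right comp_in_hom[OF b idf] by simp
qed

lemma broadcasting_lift_discard_left:
  assumes b: "b \<in> hom S X (TensO S X X)"
    and b_left: "Comp S (LUnit S X) (Comp S (TensM S (del S X) (Id S X)) b) = Id S X"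
    and f: "f \<in> hom S X E"
  shows "Comp S (LUnit S E) (Comp S (TensM S (del S X) (Id S E)) (Comp S (TensM S (Id S X) f) b)) = f"
proof -
  have X: "X \<in> Ob S" and E: "E \<in> Ob S"
    using hom_dom_ob[OF b] hom_cod_ob[OF f] .
  have IdX: "Id S X \<in> hom S X X" and IdE: "Id S E \<in> hom S E E"
    and IdI: "Id S (Unit S) \<in> hom S (Unit S) (Unit S)" and dX: "del S X \<in> hom S X (Unit S)"
    using id_hom[OF X] id_hom[OF E] id_hom[OF unit_ob] del_in_hom[OF X] .
  have idf: "TensM S (Id S X) f \<in> hom S (TensO S X X) (TensO S X E)"
    using tens_in_hom[OF IdX f] .
  have Idf: "TensM S (Id S (Unit S)) f \<in> hom S (TensO S (Unit S) X) (TensO S (Unit S) E)"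
    using tens_in_hom[OF IdI f] .
  have del_id_b: "Comp S (TensM S (del S X) (Id S X)) b \<in> hom S X (TensO S (Unit S) X)"
    using comp_in_hom[OF b tens_in_hom[OF dX IdX]] .
  have "Comp S (TensM S (del S X) (Id S E)) (Comp S (TensM S (Id S X) f) b)
      = Comp S (TensM S (Id S (Unit S)) f) (Comp S (TensM S (del S X) (Id S X)) b)"
    using comp_assoc_hom[OF b idf tens_in_hom[OF dX IdE]] comp_tens_id_left[OF dX IdE f]
      comp_id_left_hom[OF f] tens_factor_left[OF dX f]
      comp_assoc_hom[OF b tens_in_hom[OF dX IdX] Idf]
    by simp
  also have "Comp S (LUnit S E) \<dots>
      = Comp S f (Comp S (LUnit S X) (Comp S (TensM S (del S X) (Id S X)) b))"
    using comp_assoc_hom[OF del_id_b Idf lunit_hom[OF E]] lunit_nat[of f]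
      comp_assoc_hom[OF del_id_b lunit_hom[OF X] f] f
    by (simp add: hom_def)
  also have "\<dots> = f"
    using b_left comp_id_right_hom[OF f] by simp
  finally show ?thesis .
qed

lemma admits_broadcasting_imp_non_creative_del:
  assumes X: "X \<in> Ob S" and "admits_broadcasting S X"
  shows "non_creative S (del S X)"
proof -
  obtain b where b: "b \<in> hom S X (TensO S X X)"
    "Comp S (RUnit S X) (Comp S (TensM S (Id S X) (del S X)) b) = Id S X"
    "Comp S (LUnit S X) (Comp S (TensM S (del S X) (Id S X)) b) = Id S X"
    using assms(2) unfolding admits_broadcasting_def by blast
  have dX: "del S X \<in> hom S X (Unit S)"
    using del_in_hom[OF X] .
  show ?thesis
    unfolding non_creative_def
  proof (intro conjI ballI allI impI)
    fix E \<pi> assume E: "E \<in> Ob S" and "dilation S (del S X) E \<pi>"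
    then have \<pi>: "\<pi> \<in> hom S X (TensO S (Unit S) E)"
      using dilation_del_iff[OF X] by blast
    define f where "f = Comp S (LUnit S E) \<pi>"
    define \<iota> where "\<iota> = Comp S (TensM S (Id S X) f) b"
    have f: "f \<in> hom S X E"
      unfolding f_def using comp_in_hom[OF \<pi> lunit_hom[OF E]] .
    have "Comp S (TensM S (del S X) (Id S E)) \<iota> \<in> hom S X (TensO S (Unit S) E)"
      unfolding \<iota>_def
      using comp_in_hom[OF comp_in_hom[OF b(1) tens_in_hom[OF id_hom[OF X] f]]
          tens_in_hom[OF dX id_hom[OF E]]] .
    moreover have "Comp S (LUnit S E) (Comp S (TensM S (del S X) (Id S E)) \<iota>) = Comp S (LUnit S E) \<pi>"
      unfolding \<iota>_def using broadcasting_lift_discard_left[OF b(1,3) f] f_def by simp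
    ultimately have "\<pi> = Comp S (TensM S (del S X) (Id S E)) \<iota>"
      using iso_cancel_left[OF lunit_iso[OF E]] lunit_hom[OF E] \<pi> by (simp add: hom_def)
    moreover have "dilation S (Id S (Dom S (del S X))) E \<iota>"
      unfolding \<iota>_def using broadcasting_lift_dilation[OF b(1,2) f] dX by (simp add: hom_def)
    ultimately show "\<exists>\<iota>. dilation S (Id S (Dom S (del S X))) E \<iota> \<and> \<pi> = Comp S (TensM S (del S X) (Id S E)) \<iota>"
      by blast
  qed (use dX in \<open>simp add: hom_def\<close>)
qed

lemma non_creative_del_imp_admits_broadcasting:
  assumes "X \<in> Ob S" "non_creative S (del S X)"
  shows "admits_broadcasting S X"
proof -
  have dX: "del S X \<in> hom S X (Unit S)"
    using del_in_hom[OF assms(1)] .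
  obtain g where g: "g \<in> hom S X (TensO S (Unit S) X)" "Comp S (LUnit S X) g = Id S X"
    using lunit_inverse[OF assms(1)] .
  have "dilation S (del S X) X g"
    using dilation_del_iff[OF assms(1)] assms(1) g(1) by blast
  then have "\<exists>\<iota>. dilation S (Id S (Dom S (del S X))) X \<iota> \<and> g = Comp S (TensM S (del S X) (Id S X)) \<iota>"
    using assms unfolding non_creative_def by blast
  moreover have "Dom S (del S X) = X"
    using dX by (simp add: hom_def)
  ultimately obtain \<iota> where \<iota>: "dilation S (Id S X) X \<iota>" "g = Comp S (TensM S (del S X) (Id S X)) \<iota>"
    by auto
  then show ?thesis
    unfolding admits_broadcasting_def dilation_Id_iff[OF assms(1)] using g(2) by blast
qed

end

theorem proposition4p18:
  fixes S :: "('o, 'm, 'z) smc_data_scheme" and X :: 'o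
  assumes "semicartesian_smc S"
    and "X \<in> Ob S"
  shows "admits_broadcasting S X \<longleftrightarrow> non_creative S (del S X)"
proof -
  interpret semicartesian_smc S by fact
  show ?thesis
    using admits_broadcasting_imp_non_creative_del non_creative_del_imp_admits_broadcasting
      \<open>X \<in> Ob S\<close> by blast
qed

end
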